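(* Assume Schinzel's Hypothesis H. Then $\liminf_{n\to\infty} j(a_n)=1$; in particular there are infinitely many $n$ with $a_n-a_{n-1}\in A$.
   Context: Let $A$ be the set of positive integers $a$ such that $a^2+1$ is prime, enumerated in increasing order as $A=\{a_1<a_2<\cdots\}$. For $n\ge 2$, $j(a_n)$ denotes the smallest index $i$ with $1\le i\le n-1$ such that $a_n-a_{n-i}\in A$. A finite set of polynomials $f_1,\dots,f_r\in\mathbb{Z}[x]$ satisfies the Bunyakovsky condition if there is no prime $p$ such that $\prod_i f_i(a)\equiv 0 \pmod p$ for all $a\in\mathbb{F}_p$. Schinzel's Hypothesis H: if $f_1,\dots,f_r\in\mathbb{Z}[x]$ are irreducible polynomials with positive leading coefficients satisfying the Bunyakovsky condition, then there are infinitely many positive integers $x$ for which $f_1(x),\dots,f_r(x)$ are all prime. *)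

theory Defs
  imports "HOL-Computational_Algebra.Computational_Algebra" "HOL-Library.Extended_Nat" "HOL-Library.Liminf_Limsup"
begin

definition setA :: "nat set" where
  "setA = {a. a > 0 \<and> prime (a^2 + 1)}"

text \<open>Paper's a_n (1-indexed, n \<ge> 1): the n-th element of A in increasing order.\<close>
definition aseq :: "nat \<Rightarrow> nat" where
  "aseq n = enumerate setA (n - 1)"

definition jidx :: "nat \<Rightarrow> enat" where
  "jidx n = (if 2 \<le> n \<and> (\<exists>i. 1 \<le> i \<and> i \<le> n - 1 \<and> aseq n - aseq (n - i) \<in> setA)
             then enat (LEAST i. 1 \<le> i \<and> i \<le> n - 1 \<and> aseq n - aseq (n - i) \<in> setA)
             else \<infinity>)"

definition bunyakovsky :: "int poly set \<Rightarrow> bool" where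
  "bunyakovsky F \<longleftrightarrow> \<not> (\<exists>p::int. prime p \<and> (\<forall>a::int. p dvd (\<Prod>f\<in>F. poly f a)))"

definition schinzel_H :: bool where
  "schinzel_H \<longleftrightarrow> (\<forall>F :: int poly set. finite F \<and> (\<forall>f\<in>F. irreducible f \<and> lead_coeff f > 0)
     \<and> bunyakovsky F \<longrightarrow> infinite {x::nat. x > 0 \<and> (\<forall>f\<in>F. prime (poly f (int x)))})"

end

theory Submission
  imports Defs
begin

text \<open>Apply Hypothesis H to \<open>x\<^sup>2 + 1\<close> and \<open>(x + 2)\<^sup>2 + 1\<close>: for infinitely many \<open>x\<close> both are
  prime, so \<open>x\<close> and \<open>x + 2\<close> lie in \<open>A\<close>. Then \<open>x + 1\<close> does not, because \<open>y\<^sup>2 + 1\<close> is even and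
  larger than 2 for odd \<open>y > 1\<close>. Hence \<open>x\<close> and \<open>x + 2\<close> are consecutive elements of \<open>A\<close> whose
  difference 2 lies in \<open>A\<close>, so \<open>j = 1\<close> at infinitely many indices; as \<open>j \<ge> 1\<close> always, the lower
  limit is 1.\<close>

lemma irreducible_monic_quadratic_without_roots:
  fixes f :: "'a::idom poly"
  assumes "degree f = 2" and "lead_coeff f = 1" and no_root: "\<And>x. poly f x \<noteq> 0"
  shows "irreducible f"
proof (rule irreducibleI)
  show "f \<noteq> 0" and "\<not> f dvd 1"
    using assms(1) by (auto simp: is_unit_poly_iff)
  fix g h assume f: "f = g * h"
  with \<open>f \<noteq> 0\<close> have "degree g + degree h = 2"
    using assms(1) by (auto simp: degree_mult_eq)
  have "lead_coeff g * lead_coeff h = 1"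
    using f assms(2) by (simp add: lead_coeff_mult)
  then have units: "lead_coeff g dvd 1" "lead_coeff h dvd 1"
    by (metis dvd_triv_left, metis dvd_triv_right)
  have no_linear_factor: False if "degree p = 1" "lead_coeff p dvd 1" "p dvd f" for p
  proof -
    obtain c u where p: "p = [:c, u:]" "u \<noteq> 0"
      using degree1_coeffs[OF \<open>degree p = 1\<close>] by metis
    with \<open>lead_coeff p dvd 1\<close> obtain v where "u * v = 1"
      by (auto elim: dvdE)
    then have "poly p (- c * v) = 0"
      by (simp add: p(1) algebra_simps)
    with \<open>p dvd f\<close> show False
      using no_root by (metis dvdE mult_eq_0_iff poly_mult)
  qed
  have constant_unit: "p dvd 1" if "degree p = 0" "lead_coeff p dvd 1" for p :: "'a poly"
    using that by (metis degree_0_id is_unit_poly_iff)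
  have "degree g = 0 \<or> degree g = 1 \<or> degree h = 0"
    using \<open>degree g + degree h = 2\<close> by arith
  moreover have "g dvd f" "h dvd f"
    using f by auto
  ultimately show "g dvd 1 \<or> h dvd 1"
    using units no_linear_factor constant_unit by blast
qed

lemma poly_sq_plus_one: "poly [:1, 0, 1:] x = x\<^sup>2 + (1::'a::comm_ring_1)"
  by (simp add: power2_eq_square)

lemma poly_shifted_sq_plus_one: "poly [:5, 4, 1:] x = (x + 2)\<^sup>2 + (1::'a::comm_ring_1)"
  by (simp add: power2_eq_square algebra_simps)

lemma sq_plus_one_neq_zero: "x\<^sup>2 + 1 \<noteq> (0::'a::linordered_idom)"
  by (metis add_nonneg_pos zero_le_power2 zero_less_one order_less_irrefl)

lemma irreducible_sq_plus_one: "irreducible ([:1, 0, 1:] :: int poly)"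
  by (rule irreducible_monic_quadratic_without_roots)
    (simp_all only: poly_sq_plus_one sq_plus_one_neq_zero, simp_all)

lemma irreducible_shifted_sq_plus_one: "irreducible ([:5, 4, 1:] :: int poly)"
  by (rule irreducible_monic_quadratic_without_roots)
    (simp_all only: poly_shifted_sq_plus_one sq_plus_one_neq_zero, simp_all)

lemma bunyakovsky_sq_plus_one_pair: "bunyakovsky {[:1, 0, 1:], [:5, 4, 1:]}"
  unfolding bunyakovsky_def
proof clarify
  fix p :: int
  assume "prime p" and p_dvd: "\<forall>a. p dvd (\<Prod>f\<in>{[:1, 0, 1:], [:5, 4, 1:]}. poly f a)"
  have prod_eq: "(\<Prod>f\<in>{[:1, 0, 1:], [:5, 4, 1:]}. poly f a) = (a\<^sup>2 + 1) * ((a + 2)\<^sup>2 + 1)"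
    for a :: int
    by (simp del: poly_pCons add: poly_sq_plus_one poly_shifted_sq_plus_one)
  have "p dvd 5" and "p dvd 4"
    using p_dvd[rule_format, of 0] p_dvd[rule_format, of "-1"] by (simp_all add: prod_eq)
  then have "p dvd 5 - 4"
    by (rule dvd_diff)
  with \<open>prime p\<close> show False
    using not_prime_unit by force
qed

lemma mem_setA_iff: "a \<in> setA \<longleftrightarrow> prime (a\<^sup>2 + 1)"
  by (cases "a = 0") (auto simp: setA_def)

lemma two_in_setA: "2 \<in> setA"
  by (simp add: setA_def)

lemma odd_not_in_setA:
  assumes "odd a" and "a > 1"
  shows "a \<notin> setA"
proof
  assume "a \<in> setA"
  then have "prime (a\<^sup>2 + 1)"
    by (simp add: mem_setA_iff)
  moreover have "even (a\<^sup>2 + 1)"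
    using \<open>odd a\<close> by simp
  moreover have "a\<^sup>2 + 1 > 2"
    using one_less_power[OF \<open>a > 1\<close>, of 2] by simp
  ultimately show False
    using prime_odd_nat[of "a\<^sup>2 + 1"] by blast
qed

lemma middle_not_in_setA:
  assumes "a \<in> setA" and "a + 2 \<in> setA"
  shows "a + 1 \<notin> setA"
proof -
  have "a > 0"
    using \<open>a \<in> setA\<close> by (simp add: setA_def)
  moreover have "even (a + 2)"
    using odd_not_in_setA[of "a + 2"] \<open>a + 2 \<in> setA\<close> by force
  ultimately show ?thesis
    using odd_not_in_setA[of "a + 1"] by simp
qed

lemma schinzel_H_infinite_setA_pairs:
  assumes schinzel_H
  shows "infinite {a. a \<in> setA \<and> a + 2 \<in> setA}"
proof -
  let ?F = "{[:1, 0, 1:], [:5, 4, 1:] :: int poly}"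
  have "finite ?F \<and> (\<forall>f\<in>?F. irreducible f \<and> lead_coeff f > 0) \<and> bunyakovsky ?F"
    using irreducible_sq_plus_one irreducible_shifted_sq_plus_one bunyakovsky_sq_plus_one_pair
    by simp
  with assms have "infinite {x::nat. x > 0 \<and> (\<forall>f\<in>?F. prime (poly f (int x)))}"
    unfolding schinzel_H_def by blast
  moreover have "{x::nat. x > 0 \<and> (\<forall>f\<in>?F. prime (poly f (int x)))}
      \<subseteq> {a. a \<in> setA \<and> a + 2 \<in> setA}"
  proof clarify
    fix x :: nat
    assume "\<forall>f\<in>?F. prime (poly f (int x))"
    moreover have "poly [:1, 0, 1:] (int x) = int (x\<^sup>2 + 1)"
      and "poly [:5, 4, 1:] (int x) = int ((x + 2)\<^sup>2 + 1)"
      by (simp_all only: poly_sq_plus_one poly_shifted_sq_plus_one) simp_all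
    ultimately have "prime (int (x\<^sup>2 + 1))" and "prime (int ((x + 2)\<^sup>2 + 1))"
      by (metis insert_iff)+
    then show "x \<in> setA \<and> x + 2 \<in> setA"
      by (simp only: prime_nat_int_transfer mem_setA_iff)
  qed
  ultimately show ?thesis
    by (rule infinite_super[rotated])
qed

lemma enumerate_Suc_eq_next:
  fixes S :: "nat set"
  assumes "infinite S" and "y \<in> S" and "enumerate S k < y"
    and "\<And>z. z \<in> S \<Longrightarrow> enumerate S k < z \<Longrightarrow> y \<le> z"
  shows "enumerate S (Suc k) = y"
  unfolding enumerate_Suc''[OF \<open>infinite S\<close>] using assms(2-) by (intro Least_equality) auto

lemma aseq_consecutive_pair:
  assumes "infinite setA" and "a \<in> setA" and "a + 2 \<in> setA"
  obtains n where "n \<ge> 2" and "aseq (n - 1) = a" and "aseq n = a + 2"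
proof -
  obtain k where k: "enumerate setA k = a"
    using enumerate_Ex[OF \<open>infinite setA\<close> \<open>a \<in> setA\<close>] by blast
  have "a + 2 \<le> z" if "z \<in> setA" and "a < z" for z
    using that middle_not_in_setA[OF assms(2,3)] by (cases "z = a + 1") auto
  then have "enumerate setA (Suc k) = a + 2"
    using k assms by (intro enumerate_Suc_eq_next) auto
  then show ?thesis
    using k by (intro that[of "k + 2"]) (simp_all add: aseq_def)
qed

lemma infinite_consecutive_differences_in_setA:
  assumes pairs: "infinite {a. a \<in> setA \<and> a + 2 \<in> setA}"
  shows "infinite {n. 2 \<le> n \<and> aseq n - aseq (n - 1) \<in> setA}" (is "infinite ?N")
proof
  assume "finite ?N"
  have "infinite setA"
    using pairs by (rule infinite_super[rotated]) blast
  have "{a. a \<in> setA \<and> a + 2 \<in> setA} \<subseteq> (\<lambda>n. aseq (n - 1)) ` ?N"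
  proof
    fix a assume "a \<in> {a. a \<in> setA \<and> a + 2 \<in> setA}"
    then obtain n where "n \<ge> 2" "aseq (n - 1) = a" "aseq n = a + 2"
      using aseq_consecutive_pair[OF \<open>infinite setA\<close>] by blast
    with two_in_setA show "a \<in> (\<lambda>n. aseq (n - 1)) ` ?N"
      by (intro image_eqI[of _ _ n]) auto
  qed
  with \<open>finite ?N\<close> have "finite {a. a \<in> setA \<and> a + 2 \<in> setA}"
    by (rule finite_surj)
  with pairs show False
    by contradiction
qed

lemma one_le_jidx: "1 \<le> jidx n"
proof -
  let ?P = "\<lambda>i. 1 \<le> i \<and> i \<le> n - 1 \<and> aseq n - aseq (n - i) \<in> setA"
  have "1 \<le> (LEAST i. ?P i)" if "\<exists>i. ?P i"
    using LeastI_ex[OF that] by blast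
  then show ?thesis
    unfolding jidx_def by (simp add: one_enat_def)
qed

lemma jidx_eq_1:
  assumes "2 \<le> n" and "aseq n - aseq (n - 1) \<in> setA"
  shows "jidx n = 1"
proof -
  have "(LEAST i. 1 \<le> i \<and> i \<le> n - 1 \<and> aseq n - aseq (n - i) \<in> setA) = 1"
    using assms by (intro Least_equality) auto
  moreover have "\<exists>i. 1 \<le> i \<and> i \<le> n - 1 \<and> aseq n - aseq (n - i) \<in> setA"
    using assms by (intro exI[of _ 1]) auto
  ultimately show ?thesis
    using assms unfolding jidx_def one_enat_def by presburger
qed

lemma Liminf_eq_frequently_attained_lower_bound:
  fixes f :: "'a \<Rightarrow> 'b::complete_linorder"
  assumes "\<forall>\<^sub>F x in F. c \<le> f x" and "\<exists>\<^sub>F x in F. f x = c"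
  shows "Liminf F f = c"
proof (rule order.antisym)
  show "c \<le> Liminf F f"
    using assms(1) by (rule Liminf_bounded)
  show "Liminf F f \<le> c"
  proof (rule Liminf_least)
    fix P assume "eventually P F"
    with assms(2) obtain x where "P x" and "f x = c"
      using frequently_eventually_frequently[of "\<lambda>x. f x = c" F P] by (auto dest: frequently_ex)
    then show "(INF x\<in>Collect P. f x) \<le> c"
      by (metis INF_lower mem_Collect_eq)
  qed
qed

theorem proposition3:
  assumes "schinzel_H"
  shows "Liminf sequentially jidx = 1 \<and> infinite {n. 2 \<le> n \<and> aseq n - aseq (n - 1) \<in> setA}"
proof
  let ?N = "{n. 2 \<le> n \<and> aseq n - aseq (n - 1) \<in> setA}"
  show N: "infinite ?N"
    using schinzel_H_infinite_setA_pairs[OF assms] by (rule infinite_consecutive_differences_in_setA)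
  have "?N \<subseteq> {n. jidx n = 1}"
    using jidx_eq_1 by blast
  with N have "infinite {n. jidx n = 1}"
    by (rule infinite_super[rotated])
  then have "\<exists>\<^sub>F n in sequentially. jidx n = 1"
    by (simp only: cofinite_eq_sequentially[symmetric] frequently_cofinite not_False_eq_True)
  then show "Liminf sequentially jidx = 1"
    using one_le_jidx by (intro Liminf_eq_frequently_attained_lower_bound) simp_all
qed

end
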